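(* In the setting described in the context, for real constants $c_0,c_1,c_2$ consider the covariant derivative $D$ determined by $$D\Xi^a=c_0X^a\varrho\otimes\varrho+c_1(-1)^{\hat a}\,\Xi^a\otimes\varrho+c_2\,\varrho\otimes\Xi^a,\qquad a=1,2,3.$$ Its torsion $\Theta=d-\pi\circ D$ satisfies $\Theta(\Xi^a)=-(c_1+c_2)\,\varrho\wedge\Xi^a$; hence $D$ is torsionless if and only if $c_2=-c_1$, so the torsionless connections of this form are exactly the two-parameter family $$D\Xi^a=c_0X^a\varrho\otimes\varrho+c_1\big((-1)^{\hat a}\Xi^a\otimes\varrho-\varrho\otimes\Xi^a\big),$$ i.e. $D\xi_1=c_0\theta_1\varrho\otimes\varrho+c_1(\xi_1\otimes\varrho-\varrho\otimes\xi_1)$, $D\eta=c_0x\varrho\otimes\varrho-c_1(\eta\otimes\varrho+\varrho\otimes\eta)$, $D\xi_2=c_0\theta_2\varrho\otimes\varrho+c_1(\xi_2\otimes\varrho-\varrho\otimes\xi_2)$.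
   Context: Fix a real (commuting) parameter $h$. $\mathcal A$ is the $\mathbb Z_2$-graded algebra (quantum superspace covariant under the super-Jordanian quantum supergroup $OSp_h(2/1)$) generated by odd $\theta_1,\theta_2$ and even $x$ with relations $[\theta_1,x]=-hx\theta_2$, $\{\theta_1,\theta_2\}=0$, $[\theta_2,x]=0$, $\theta_1^2=-\frac h2(x^2-2\theta_1\theta_2)$, $\theta_2^2=0$. Write $(X^1,X^2,X^3)=(\theta_1,x,\theta_2)$, index parities $\hat1=\hat3=0$, $\hat2=1$, and $\Xi^a=dX^a$, i.e. $\xi_1=d\theta_1$, $\eta=dx$, $\xi_2=d\theta_2$; $\xi_1,\xi_2$ are even and $\eta$ odd (the parity of $\Xi^a$ is $\hat a$). The exterior derivative $d$ is nilpotent and satisfies $d(f\wedge g)=df\wedge g+(-1)^{\hat f}f\wedge dg$. The differential calculus has the relations: $\xi_1\wedge\eta-\eta\wedge\xi_1=h\eta\wedge\xi_2$, $\xi_1\wedge\xi_2-\xi_2\wedge\xi_1=h\xi_2\wedge\xi_2$, $\eta\wedge\xi_2=\xi_2\wedge\eta$, $\eta\wedge\eta=-\frac h2\xi_2\wedge\xi_2$; and $[\theta_1,\xi_1]=h(\theta_1\xi_2+x\eta-\theta_2\xi_1-\frac h2\theta_2\xi_2)$, $\{\theta_1,\eta\}=hx\xi_2$, $[\theta_1,\xi_2]=h\theta_2\xi_2$, $[x,\xi_1]=-h\theta_2\eta$, $[x,\eta]=-h\theta_2\xi_2$, $[x,\xi_2]=0$, $[\theta_2,\xi_1]=-h\theta_2\xi_2$,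 $\{\theta_2,\eta\}=0$, $[\theta_2,\xi_2]=0$. The invariant one-form is $\varrho=\theta_1\xi_2+x\eta-\theta_2\xi_1-\frac h2\theta_2\xi_2$. The map $\pi:\Omega^1\otimes_{\mathcal A}\Omega^1\to\Omega^2$ is $\pi(\alpha\otimes\beta)=\alpha\wedge\beta$. The map $\sigma$ on $\Omega^1\otimes_{\mathcal A}\Omega^1$ is the $\mathcal A$-bilinear map given by $\sigma(\xi_1\otimes\xi_1)=\xi_1\otimes\xi_1-h(\xi_1\otimes\xi_2+\eta\otimes\eta-\xi_2\otimes\xi_1-\frac h2\xi_2\otimes\xi_2)$, $\sigma(\xi_1\otimes\eta)=\eta\otimes\xi_1+h\xi_2\otimes\eta$, $\sigma(\xi_1\otimes\xi_2)=\xi_2\otimes\xi_1+h\xi_2\otimes\xi_2$, $\sigma(\eta\otimes\xi_1)=\xi_1\otimes\eta-h\eta\otimes\xi_2$, $\sigma(\eta\otimes\eta)=-\eta\otimes\eta-h\xi_2\otimes\xi_2$, $\sigma(\eta\otimes\xi_2)=\xi_2\otimes\eta$, $\sigma(\xi_2\otimes\xi_1)=\xi_1\otimes\xi_2-h\xi_2\otimes\xi_2$, $\sigma(\xi_2\otimes\eta)=\eta\otimes\xi_2$, $\sigma(\xi_2\otimes\xi_2)=\xi_2\otimes\xi_2$. A covariant derivative (linear connection) is a linear map $D:\Omega^1\to\Omega^1\otimes_{\mathcal A}\Omega^1$ with $D(f\xi)=df\otimes\xi+(-1)^{\hat f}fD\xi$ and $D(\xi f)=(-1)^{\hat\xi}\sigma(\xi\otimes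 df)+(D\xi)f$ for homogeneous $f\in\mathcal A$, $\xi\in\Omega^1$; it is determined by its values on $\Xi^a$. Its torsion is $\Theta=d-\pi\circ D$. *)

theory Defs
  imports Complex_Main
begin

datatype gen = Th1 | Xx | Th2 | Xi1 | Eta | Xi2

fun gpar :: "gen \<Rightarrow> bool" where
  "gpar Th1 = True" | "gpar Xx = False" | "gpar Th2 = True"
| "gpar Xi1 = False" | "gpar Eta = True" | "gpar Xi2 = False"

fun gdeg :: "gen \<Rightarrow> nat" where
  "gdeg Th1 = 0" | "gdeg Xx = 0" | "gdeg Th2 = 0"
| "gdeg Xi1 = 1" | "gdeg Eta = 1" | "gdeg Xi2 = 1"

text \<open>Terms of the free unital associative real algebra on the generators:
  C r is r times the unit, Pl is sum, Tm is (wedge / tensor) product.\<close>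
datatype fexp = G gen | C real | Pl fexp fexp | Tm fexp fexp

definition mn :: "fexp \<Rightarrow> fexp \<Rightarrow> fexp" where "mn a b = Pl a (Tm (C (-1)) b)"
definition sm :: "real \<Rightarrow> fexp \<Rightarrow> fexp" where "sm r a = Tm (C r) a"

inductive cong :: "(fexp \<times> fexp) set \<Rightarrow> fexp \<Rightarrow> fexp \<Rightarrow> bool" for R where
  rel: "(a, b) \<in> R \<Longrightarrow> cong R a b"
| refl: "cong R a a"
| sym: "cong R a b \<Longrightarrow> cong R b a"
| trans: "cong R a b \<Longrightarrow> cong R b c \<Longrightarrow> cong R a c"
| pl_cong: "cong R a a' \<Longrightarrow> cong R b b' \<Longrightarrow> cong R (Pl a b) (Pl a' b')"
| tm_cong: "cong R a a' \<Longrightarrow> cong R b b' \<Longrightarrow> cong R (Tm a b) (Tm a' b')"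
| pl_assoc: "cong R (Pl (Pl a b) c) (Pl a (Pl b c))"
| pl_comm: "cong R (Pl a b) (Pl b a)"
| pl_zero: "cong R (Pl (C 0) a) a"
| pl_neg: "cong R (Pl a (Tm (C (-1)) a)) (C 0)"
| tm_assoc: "cong R (Tm (Tm a b) c) (Tm a (Tm b c))"
| tm_one_l: "cong R (Tm (C 1) a) a"
| tm_one_r: "cong R (Tm a (C 1)) a"
| distl: "cong R (Tm a (Pl b c)) (Pl (Tm a b) (Tm a c))"
| distr: "cong R (Tm (Pl a b) c) (Pl (Tm a c) (Tm b c))"
| c_add: "cong R (Pl (C r) (C s)) (C (r + s))"
| c_mul: "cong R (Tm (C r) (C s)) (C (r * s))"
| c_central: "cong R (Tm (C r) a) (Tm a (C r))"

abbreviation "t1 \<equiv> G Th1"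
abbreviation "xx \<equiv> G Xx"
abbreviation "t2 \<equiv> G Th2"
abbreviation "e1 \<equiv> G Xi1"
abbreviation "et \<equiv> G Eta"
abbreviation "e2 \<equiv> G Xi2"

definition rho :: "real \<Rightarrow> fexp" where
  "rho h = mn (Pl (Tm t1 e2) (Tm xx et)) (Pl (Tm t2 e1) (sm (h/2) (Tm t2 e2)))"

definition relA :: "real \<Rightarrow> (fexp \<times> fexp) set" where
  "relA h = {
    (mn (Tm t1 xx) (Tm xx t1), sm (-h) (Tm xx t2)),
    (Pl (Tm t1 t2) (Tm t2 t1), C 0),
    (mn (Tm t2 xx) (Tm xx t2), C 0),
    (Tm t1 t1, sm (-h/2) (mn (Tm xx xx) (sm 2 (Tm t1 t2)))),
    (Tm t2 t2, C 0) }"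

definition relB :: "real \<Rightarrow> (fexp \<times> fexp) set" where
  "relB h = {
    (mn (Tm t1 e1) (Tm e1 t1), sm h (rho h)),
    (Pl (Tm t1 et) (Tm et t1), sm h (Tm xx e2)),
    (mn (Tm t1 e2) (Tm e2 t1), sm h (Tm t2 e2)),
    (mn (Tm xx e1) (Tm e1 xx), sm (-h) (Tm t2 et)),
    (mn (Tm xx et) (Tm et xx), sm (-h) (Tm t2 e2)),
    (mn (Tm xx e2) (Tm e2 xx), C 0),
    (mn (Tm t2 e1) (Tm e1 t2), sm (-h) (Tm t2 e2)),
    (Pl (Tm t2 et) (Tm et t2), C 0),
    (mn (Tm t2 e2) (Tm e2 t2), C 0) }"

definition relW :: "real \<Rightarrow> (fexp \<times> fexp) set" where
  "relW h = {
    (mn (Tm e1 et) (Tm et e1), sm h (Tm et e2)),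
    (mn (Tm e1 e2) (Tm e2 e1), sm h (Tm e2 e2)),
    (Tm et e2, Tm e2 et),
    (Tm et et, sm (-h/2) (Tm e2 e2)) }"

text \<open>Equality in Omega1 (x)_A Omega1 (tensor product = concatenation without
  the wedge relations; also equality in A and in Omega1) ...\<close>
definition eqT :: "real \<Rightarrow> fexp \<Rightarrow> fexp \<Rightarrow> bool" where
  "eqT h = cong (relA h \<union> relB h)"

text \<open>... and equality in the exterior algebra Omega (in particular Omega2).
  The map pi (alpha (x) beta \<mapsto> alpha \<and> beta) is the identity on representatives.\<close>
definition eqO :: "real \<Rightarrow> fexp \<Rightarrow> fexp \<Rightarrow> bool" where
  "eqO h = cong (relA h \<union> relB h \<union> relW h)"

inductive fdeg :: "fexp \<Rightarrow> nat \<Rightarrow> bool" where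
  "fdeg (G g) (gdeg g)"
| "fdeg (C r) 0"
| "fdeg (C 0) k"
| "fdeg a k \<Longrightarrow> fdeg b k \<Longrightarrow> fdeg (Pl a b) k"
| "fdeg a i \<Longrightarrow> fdeg b j \<Longrightarrow> fdeg (Tm a b) (i + j)"

inductive ispar :: "fexp \<Rightarrow> bool \<Rightarrow> bool" where
  "ispar (G g) (gpar g)"
| "ispar (C r) False"
| "ispar (C 0) p"
| "ispar a p \<Longrightarrow> ispar b p \<Longrightarrow> ispar (Pl a b) p"
| "ispar a p \<Longrightarrow> ispar b q \<Longrightarrow> ispar (Tm a b) (p \<noteq> q)"

definition sgn :: "bool \<Rightarrow> real" where "sgn p = (if p then -1 else 1)"

fun evod :: "fexp \<Rightarrow> fexp \<times> fexp" where
  "evod (G g) = (if gpar g then (C 0, G g) else (G g, C 0))"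
| "evod (C r) = (C r, C 0)"
| "evod (Pl a b) = (let (ea, oa) = evod a; (eb, ob) = evod b in (Pl ea eb, Pl oa ob))"
| "evod (Tm a b) = (let (ea, oa) = evod a; (eb, ob) = evod b in
     (Pl (Tm ea eb) (Tm oa ob), Pl (Tm ea ob) (Tm oa eb)))"

fun dgen :: "gen \<Rightarrow> fexp" where
  "dgen Th1 = G Xi1" | "dgen Xx = G Eta" | "dgen Th2 = G Xi2"
| "dgen Xi1 = C 0" | "dgen Eta = C 0" | "dgen Xi2 = C 0"

fun dd :: "fexp \<Rightarrow> fexp" where
  "dd (G g) = dgen g"
| "dd (C r) = C 0"
| "dd (Pl a b) = Pl (dd a) (dd b)"
| "dd (Tm a b) = Pl (Tm (dd a) b)
      (Pl (Tm (fst (evod a)) (dd b)) (Tm (C (-1)) (Tm (snd (evod a)) (dd b))))"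

fun sigtab :: "real \<Rightarrow> gen \<Rightarrow> gen \<Rightarrow> fexp" where
  "sigtab h Xi1 Xi1 = mn (Tm e1 e1)
      (sm h (mn (Pl (Tm e1 e2) (Tm et et)) (Pl (Tm e2 e1) (sm (h/2) (Tm e2 e2)))))"
| "sigtab h Xi1 Eta = Pl (Tm et e1) (sm h (Tm e2 et))"
| "sigtab h Xi1 Xi2 = Pl (Tm e2 e1) (sm h (Tm e2 e2))"
| "sigtab h Eta Xi1 = mn (Tm e1 et) (sm h (Tm et e2))"
| "sigtab h Eta Eta = mn (sm (-1) (Tm et et)) (sm h (Tm e2 e2))"
| "sigtab h Eta Xi2 = Tm e2 et"
| "sigtab h Xi2 Xi1 = mn (Tm e1 e2) (sm h (Tm e2 e2))"
| "sigtab h Xi2 Eta = Tm et e2"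
| "sigtab h Xi2 Xi2 = Tm e2 e2"
| "sigtab h a b = C 0"

definition isXi :: "gen \<Rightarrow> bool" where "isXi g \<longleftrightarrow> g \<in> {Xi1, Eta, Xi2}"

definition is_sigma :: "real \<Rightarrow> (fexp \<Rightarrow> fexp) \<Rightarrow> bool" where
  "is_sigma h sig \<longleftrightarrow>
    (\<forall>a b. fdeg a 2 \<longrightarrow> fdeg b 2 \<longrightarrow> eqT h a b \<longrightarrow> eqT h (sig a) (sig b)) \<and>
    (\<forall>a b. fdeg a 2 \<longrightarrow> fdeg b 2 \<longrightarrow> eqT h (sig (Pl a b)) (Pl (sig a) (sig b))) \<and>
    (\<forall>f a. fdeg f 0 \<longrightarrow> fdeg a 2 \<longrightarrow> eqT h (sig (Tm f a)) (Tm f (sig a))) \<and>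
    (\<forall>f a. fdeg f 0 \<longrightarrow> fdeg a 2 \<longrightarrow> eqT h (sig (Tm a f)) (Tm (sig a) f)) \<and>
    (\<forall>a b. isXi a \<longrightarrow> isXi b \<longrightarrow> eqT h (sig (Tm (G a) (G b))) (sigtab h a b))"

definition is_connection :: "real \<Rightarrow> (fexp \<Rightarrow> fexp) \<Rightarrow> (fexp \<Rightarrow> fexp) \<Rightarrow> bool" where
  "is_connection h sig D \<longleftrightarrow>
    (\<forall>a b. fdeg a 1 \<longrightarrow> fdeg b 1 \<longrightarrow> eqT h a b \<longrightarrow> eqT h (D a) (D b)) \<and>
    (\<forall>a b. fdeg a 1 \<longrightarrow> fdeg b 1 \<longrightarrow> eqT h (D (Pl a b)) (Pl (D a) (D b))) \<and>
    (\<forall>r a. fdeg a 1 \<longrightarrow> eqT h (D (sm r a)) (sm r (D a))) \<and>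
    (\<forall>f p xi. fdeg f 0 \<longrightarrow> ispar f p \<longrightarrow> fdeg xi 1 \<longrightarrow>
       eqT h (D (Tm f xi)) (Pl (Tm (dd f) xi) (Tm (C (sgn p)) (Tm f (D xi))))) \<and>
    (\<forall>f xi q. fdeg f 0 \<longrightarrow> fdeg xi 1 \<longrightarrow> ispar xi q \<longrightarrow>
       eqT h (D (Tm xi f)) (Pl (Tm (C (sgn q)) (sig (Tm xi (dd f)))) (Tm (D xi) f)))"

definition torsion :: "(fexp \<Rightarrow> fexp) \<Rightarrow> fexp \<Rightarrow> fexp" where
  "torsion D w = mn (dd w) (D w)"

definition torsionless :: "real \<Rightarrow> (fexp \<Rightarrow> fexp) \<Rightarrow> bool" where
  "torsionless h D \<longleftrightarrow> (\<forall>w. fdeg w 1 \<longrightarrow> eqO h (torsion D w) (C 0))"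

fun Xa :: "nat \<Rightarrow> fexp" where
  "Xa (Suc 0) = G Th1" | "Xa (Suc (Suc 0)) = G Xx" | "Xa _ = G Th2"
fun Xia :: "nat \<Rightarrow> fexp" where
  "Xia (Suc 0) = G Xi1" | "Xia (Suc (Suc 0)) = G Eta" | "Xia _ = G Xi2"
definition hat :: "nat \<Rightarrow> nat" where "hat a = (if a = 2 then 1 else 0)"

end

theory Submission
  imports Defs
begin

(* Suitably oriented, the relations form a terminating rewrite system, so
   \<rho> \<wedge> \<rho> = 0 and \<Xi>^a \<wedge> \<rho> = (-1)^(hat a) \<rho> \<wedge> \<Xi>^a follow by ring normalisation. Since d \<Xi>^a = 0,
   they give \<Theta>(\<Xi>^a) = - \<pi>(D \<Xi>^a) = - (c1 + c2) \<rho> \<wedge> \<Xi>^a.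

   The wedge relations say exactly that \<pi> \<circ> \<sigma> = \<pi> on the basis \<Xi>^a \<otimes> \<Xi>^b; since \<Omega>1 is
   generated by the \<Xi>^a as a left A-module, \<pi> \<circ> \<sigma> = \<pi> holds on all of \<Omega>1 \<otimes>\<^sub>A \<Omega>1. Then the
   Leibniz rules of d and D agree after applying \<pi>, so the torsion vanishes on \<Omega>1 as soon as it
   vanishes on the \<Xi>^a, which is the case for c2 = - c1. Conversely, a representation of \<Omega> on
   \<real>^8 in which \<rho> \<wedge> \<xi>2 acts nontrivially shows \<rho> \<wedge> \<xi>2 \<noteq> 0, so a torsionless D has c1 + c2 = 0. *)

section \<open>Algebras presented by the relations\<close>

declare cong.trans [trans]

lemma cong_mono: "cong R a b \<Longrightarrow> R \<subseteq> S \<Longrightarrow> cong S a b"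
  by (induction rule: cong.induct) (auto intro: cong.intros)

lemma cong_zero_mult: "cong R (Tm (C 0) a) (C 0)"
proof -
  have "cong R (Tm (C 0) a) (Tm (Pl (C 1) (Tm (C (-1)) (C 1))) a)"
    by (intro cong.tm_cong cong.sym[OF cong.pl_neg] cong.refl)
  also have "cong R \<dots> (Pl a (Tm (C (-1)) a))"
    by (meson cong.distr cong.pl_cong cong.refl cong.tm_assoc cong.tm_cong cong.tm_one_l cong.trans)
  also have "cong R \<dots> (C 0)"
    by (rule cong.pl_neg)
  finally show ?thesis .
qed

lemma equivp_pointwise_cong: "equivp (\<lambda>f g. \<forall>h::real. cong (R h) (f h) (g h))"
  by (rule equivpI; auto simp: reflp_def symp_def transp_def intro: cong.intros)

text \<open>The type parameter only selects a family of relation sets, one for each \<open>h\<close>;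
  \<open>'a presented\<close> is the product over all \<open>h\<close> of the algebras they present, and \<open>cls h a\<close> is the
  class of \<open>a\<close> in the factor at \<open>h\<close>. This embedding is not unital, so scalars \<open>C r\<close> are
  handled by \<open>cls_C_mult\<close> rather than by a homomorphism property.\<close>

class presentation =
  fixes relations :: "'a itself \<Rightarrow> real \<Rightarrow> (fexp \<times> fexp) set"
  assumes bimodule_relations: "relA h \<union> relB h \<subseteq> relations TYPE('a) h"

quotient_type (overloaded) 'a presented =
  "real \<Rightarrow> fexp" / "\<lambda>f g. \<forall>h. cong (relations TYPE('a::presentation) h) (f h) (g h)"
  by (rule equivp_pointwise_cong)

instantiation presented :: (presentation) ring
begin

lift_definition zero_presented :: "'a presented" is "\<lambda>h. C 0" .

lift_definition plus_presented :: "'a presented \<Rightarrow> 'a presented \<Rightarrow> 'a presented"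
  is "\<lambda>f g h. Pl (f h) (g h)"
  by (auto intro: cong.pl_cong)

lift_definition uminus_presented :: "'a presented \<Rightarrow> 'a presented"
  is "\<lambda>f h. Tm (C (-1)) (f h)"
  by (auto intro: cong.tm_cong cong.refl)

lift_definition minus_presented :: "'a presented \<Rightarrow> 'a presented \<Rightarrow> 'a presented"
  is "\<lambda>f g h. Pl (f h) (Tm (C (-1)) (g h))"
  by (auto intro: cong.pl_cong cong.tm_cong cong.refl)

lift_definition times_presented :: "'a presented \<Rightarrow> 'a presented \<Rightarrow> 'a presented"
  is "\<lambda>f g h. Tm (f h) (g h)"
  by (auto intro: cong.tm_cong)

instance
proof
  fix a b c :: "'a presented"
  show "a + b + c = a + (b + c)" by transfer (simp add: cong.pl_assoc)
  show "a + b = b + a" by transfer (simp add: cong.pl_comm)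
  show "0 + a = a" by transfer (simp add: cong.pl_zero)
  show "- a + a = 0" by transfer (meson cong.pl_comm cong.pl_neg cong.trans)
  show "a - b = a + - b" by transfer (simp add: cong.refl)
  show "a * b * c = a * (b * c)" by transfer (simp add: cong.tm_assoc)
  show "(a + b) * c = a * c + b * c" by transfer (simp add: cong.distr)
  show "a * (b + c) = a * b + a * c" by transfer (simp add: cong.distl)
qed

end

lift_definition scalar :: "real \<Rightarrow> 'a::presentation presented" is "\<lambda>r h. C r" .

lemma scalar_add: "scalar r + scalar s = scalar (r + s)"
  by transfer (simp add: cong.c_add)

lemma scalar_mult: "scalar r * scalar s = scalar (r * s)"
  by transfer (simp add: cong.c_mul)

lemma scalar_commute: "scalar r * a = a * scalar r"
  by transfer (simp add: cong.c_central)

lemma scalar_one_mult [simp]: "scalar 1 * a = a"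
  by transfer (simp add: cong.tm_one_l)

lemma scalar_minus_one_mult [simp]: "scalar (-1) * a = - a"
  by transfer (simp add: cong.refl)

lemma scalar_zero [simp]: "scalar 0 = 0"
  by transfer (simp add: cong.refl)

lemma scalar_uminus: "scalar (- r) = - scalar r"
  by (metis mult_minus1 scalar_minus_one_mult scalar_mult)

lemma scalar_two_mult [simp]: "scalar 2 * a = a + a"
  by (metis one_add_one scalar_add scalar_one_mult distrib_right)

definition cls :: "real \<Rightarrow> fexp \<Rightarrow> 'a::presentation presented" where
  "cls h a = abs_presented (\<lambda>h'. if h' = h then a else C 0)"

lemma cls_eq_iff:
  "cls h a = (cls h b :: 'a::presentation presented) \<longleftrightarrow> cong (relations TYPE('a) h) a b"
  unfolding cls_def presented.abs_eq_iff by (metis cong.refl)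

lemma cls_Pl [simp]: "cls h (Pl a b) = cls h a + cls h b"
  unfolding cls_def plus_presented.abs_eq presented.abs_eq_iff
  by (auto simp: cong.refl intro: cong.sym cong.pl_zero)

lemma cls_Tm [simp]: "cls h (Tm a b) = cls h a * cls h b"
  unfolding cls_def times_presented.abs_eq presented.abs_eq_iff
  by (auto simp: cong.refl intro: cong.sym cong_zero_mult)

lemma cls_zero [simp]: "cls h (C 0) = 0"
  unfolding cls_def zero_presented_def by (simp add: cong.refl)

lemma cls_C_mult [simp]: "cls h (C r) * cls h a = scalar r * cls h a"
proof -
  have "cls h (Tm (C r) a) = scalar r * cls h a"
    unfolding cls_def times_presented.abs_eq scalar.abs_eq presented.abs_eq_iff
    by (auto simp: cong.refl intro: cong.sym cong.trans[OF cong.c_central cong_zero_mult])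
  then show ?thesis by simp
qed

lemma cls_C_mult_assoc [simp]: "cls h (C r) * (cls h a * z) = scalar r * (cls h a * z)"
  by (simp flip: mult.assoc)

lemma cls_mult_C [simp]:
  "cls h a * cls h (C r) = (scalar r * cls h a :: 'a::presentation presented)"
proof -
  have "(cls h (Tm a (C r)) :: 'a presented) = cls h (Tm (C r) a)"
    unfolding cls_eq_iff by (rule cong.sym[OF cong.c_central])
  then show ?thesis by simp
qed

lemma cls_mn [simp]: "cls h (mn a b) = cls h a - cls h b"
  by (simp add: mn_def)

lemma cls_sm [simp]: "cls h (sm r a) = scalar r * cls h a"
  by (simp add: sm_def)

lemma cls_relation: "(a, b) \<in> relA h \<union> relB h \<Longrightarrow> cls h a = cls h b"
  using bimodule_relations by (auto simp: cls_eq_iff intro: cong.rel)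

datatype tensors = Tensors

datatype forms = Forms

instantiation tensors :: presentation
begin
definition relations_tensors :: "tensors itself \<Rightarrow> real \<Rightarrow> (fexp \<times> fexp) set" where
  "relations_tensors _ h = relA h \<union> relB h"
instance by standard (simp add: relations_tensors_def)
end

instantiation forms :: presentation
begin
definition relations_forms :: "forms itself \<Rightarrow> real \<Rightarrow> (fexp \<times> fexp) set" where
  "relations_forms _ h = relA h \<union> relB h \<union> relW h"
instance by standard (auto simp: relations_forms_def)
end

abbreviation clsT :: "real \<Rightarrow> fexp \<Rightarrow> tensors presented" where
  "clsT \<equiv> cls"

abbreviation clsO :: "real \<Rightarrow> fexp \<Rightarrow> forms presented" where
  "clsO \<equiv> cls"

lemma eqT_iff_clsT: "eqT h a b \<longleftrightarrow> clsT h a = clsT h b"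
  by (simp add: cls_eq_iff eqT_def relations_tensors_def)

lemma eqO_iff_clsO: "eqO h a b \<longleftrightarrow> clsO h a = clsO h b"
  by (simp add: cls_eq_iff eqO_def relations_forms_def)

lemma clsO_eq_if_clsT_eq: "clsT h a = clsT h b \<Longrightarrow> clsO h a = clsO h b"
  unfolding eqT_iff_clsT[symmetric] eqO_iff_clsO[symmetric] eqT_def eqO_def
  by (erule cong_mono) auto

lemma clsO_eq_if_eqT: "eqT h a b \<Longrightarrow> clsO h a = clsO h b"
  unfolding eqT_iff_clsT by (rule clsO_eq_if_clsT_eq)

text \<open>All coefficients occurring in the relations are sums of products of \<open>h/2\<close>; expressed
  through \<open>half h\<close> they are collected by the ring normaliser.\<close>

definition half :: "real \<Rightarrow> 'a::presentation presented" where
  "half h = scalar (h / 2)"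

lemma scalar_eq_half:
  "scalar h = half h + half h" "scalar (- h) = - (half h + half h)"
  "scalar (- (h / 2)) = - half h" "scalar (h / 2) = half h"
  unfolding half_def scalar_add scalar_uminus by simp_all

lemma gen_mult_half [simp]:
  "cls h' (G g) * half h = half h * cls h' (G g)"
  "cls h' (G g) * (half h * z) = half h * (cls h' (G g) * z)"
  unfolding half_def by (metis scalar_commute mult.assoc)+

lemma cls_rho: "cls h (rho h) =
  cls h t1 * cls h e2 - cls h t2 * cls h e1 - half h * (cls h t2 * cls h e2) + cls h xx * cls h et"
  by (simp add: rho_def scalar_eq_half[of h] algebra_simps)

lemma relA_cls: "\<forall>(a, b) \<in> relA h. cls h a = cls h b"
  using cls_relation by blast

lemma relB_cls: "\<forall>(a, b) \<in> relB h. cls h a = cls h b"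
  using cls_relation by blast

lemma relW_cls: "\<forall>(a, b) \<in> relW h. clsO h a = clsO h b"
  by (auto simp: cls_eq_iff relations_forms_def intro: cong.rel)

lemma relA_rules:
  "(cls h t1 * cls h xx :: 'a::presentation presented)
     = cls h xx * cls h t1 - (half h + half h) * (cls h xx * cls h t2)"
  "(cls h t2 * cls h t1 :: 'a presented) = - (cls h t1 * cls h t2)"
  "(cls h t2 * cls h xx :: 'a presented) = cls h xx * cls h t2"
  "(cls h t1 * cls h t1 :: 'a presented)
     = (half h + half h) * (cls h t1 * cls h t2) - half h * (cls h xx * cls h xx)"
  "(cls h t2 * cls h t2 :: 'a presented) = 0"
  using relA_cls[of h, where 'a = 'a]
  by (simp_all add: relA_def scalar_eq_half[of h] algebra_simps eq_neg_iff_add_eq_0)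

(* Needed in this orientation when normalising the remaining relations of relB. *)
lemma relB_central_rules:
  "(cls h e2 * cls h xx :: 'a::presentation presented) = cls h xx * cls h e2"
  "(cls h e2 * cls h t2 :: 'a presented) = cls h t2 * cls h e2"
  using relB_cls[of h, where 'a = 'a] by (simp_all add: relB_def)

lemma relB_rules:
  "(cls h e1 * cls h t1 :: 'a::presentation presented)
     = cls h t1 * cls h e1 - (half h + half h) * cls h (rho h)"
  "(cls h et * cls h t1 :: 'a presented)
     = (half h + half h) * (cls h xx * cls h e2) - cls h t1 * cls h et"
  "(cls h e2 * cls h t1 :: 'a presented)
     = cls h t1 * cls h e2 - (half h + half h) * (cls h t2 * cls h e2)"
  "(cls h e1 * cls h xx :: 'a presented)
     = cls h xx * cls h e1 + (half h + half h) * (cls h t2 * cls h et)"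
  "(cls h et * cls h xx :: 'a presented)
     = cls h xx * cls h et + (half h + half h) * (cls h t2 * cls h e2)"
  "(cls h e1 * cls h t2 :: 'a presented)
     = cls h t2 * cls h e1 + (half h + half h) * (cls h t2 * cls h e2)"
  "(cls h et * cls h t2 :: 'a presented) = - (cls h t2 * cls h et)"
  using relB_cls[of h, where 'a = 'a]
  by (simp_all add: relB_def relB_central_rules scalar_eq_half[of h] algebra_simps
      eq_neg_iff_add_eq_0)

lemma relW_rules:
  "clsO h e1 * clsO h et = clsO h et * clsO h e1 + (half h + half h) * (clsO h et * clsO h e2)"
  "clsO h e1 * clsO h e2 = clsO h e2 * clsO h e1 + (half h + half h) * (clsO h e2 * clsO h e2)"
  "clsO h et * clsO h e2 = clsO h e2 * clsO h et"
  "clsO h et * clsO h et = - (half h * (clsO h e2 * clsO h e2))"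
  using relW_cls[of h] by (simp_all add: relW_def scalar_eq_half[of h] algebra_simps)

lemma mult_eq_right_assoc: "a * b = c \<Longrightarrow> a * (b * z) = c * (z :: 'a :: semigroup_mult)"
  by (simp flip: mult.assoc)

text \<open>Functions are moved to the left of forms, and within each kind the generators are ordered
  as \<open>x < \<theta>1 < \<theta>2\<close> and \<open>\<xi>2 < \<eta> < \<xi>1\<close>.\<close>

lemmas forms_rules =
  relA_rules relB_central_rules relB_rules relW_rules
  relA_rules[THEN mult_eq_right_assoc] relB_central_rules[THEN mult_eq_right_assoc]
  relB_rules[THEN mult_eq_right_assoc] relW_rules[THEN mult_eq_right_assoc]

lemma rho_wedge_rho: "clsO h (rho h) * clsO h (rho h) = 0"
  by (simp add: cls_rho forms_rules algebra_simps)

lemma xi_wedge_rho: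
  "clsO h e1 * clsO h (rho h) = clsO h (rho h) * clsO h e1"
  "clsO h et * clsO h (rho h) = - (clsO h (rho h) * clsO h et)"
  "clsO h e2 * clsO h (rho h) = clsO h (rho h) * clsO h e2"
  by (simp_all add: cls_rho forms_rules algebra_simps)

lemma sigtab_eq_wedge: "isXi a \<Longrightarrow> isXi b \<Longrightarrow> clsO h (sigtab h a b) = clsO h (G a) * clsO h (G b)"
  unfolding isXi_def by (auto simp: forms_rules scalar_eq_half[of h] algebra_simps)

lemma fdeg_Tm: "fdeg a i \<Longrightarrow> fdeg b j \<Longrightarrow> k = i + j \<Longrightarrow> fdeg (Tm a b) k"
  using fdeg.intros(5) by blast

lemma fdeg_G: "k = gdeg g \<Longrightarrow> fdeg (G g) k"
  by (simp add: fdeg.intros(1))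

lemma fdeg_C0: "fdeg (C 0) k"
  by (rule fdeg.intros(3))

lemma fdeg_sm: "fdeg a k \<Longrightarrow> fdeg (sm r a) k"
  unfolding sm_def by (rule fdeg_Tm) (auto intro: fdeg.intros)

lemma fdeg_left_mult: "fdeg f 0 \<Longrightarrow> fdeg a k \<Longrightarrow> fdeg (Tm f a) k"
  using fdeg.intros(5)[of f 0 a k] by (simp only: add_0)

lemma fdeg_right_mult: "fdeg a k \<Longrightarrow> fdeg f 0 \<Longrightarrow> fdeg (Tm a f) k"
  using fdeg.intros(5)[of a k f 0] by (simp only: add_0_right)

lemma fdeg_mult_2: "fdeg a 1 \<Longrightarrow> fdeg b 1 \<Longrightarrow> fdeg (Tm a b) 2"
  using fdeg.intros(5)[of a 1 b 1] by (simp only: one_add_one)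

lemma isXi_iff_gdeg: "isXi g \<longleftrightarrow> gdeg g = 1"
  unfolding isXi_def by (cases g) auto

lemma fdeg_xi: "isXi a \<Longrightarrow> fdeg (G a) 1"
  by (simp add: fdeg_G isXi_iff_gdeg)

lemma fdeg_xi_mult: "isXi a \<Longrightarrow> fdeg f 0 \<Longrightarrow> fdeg (Tm (G a) f) 1"
  by (rule fdeg_right_mult[OF fdeg_xi])

lemma evod_Pl [simp]:
  "evod (Pl a b) = (Pl (fst (evod a)) (fst (evod b)), Pl (snd (evod a)) (snd (evod b)))"
  by (simp add: split_beta)

lemma evod_Tm [simp]:
  "evod (Tm a b) = (Pl (Tm (fst (evod a)) (fst (evod b))) (Tm (snd (evod a)) (snd (evod b))),
                    Pl (Tm (fst (evod a)) (snd (evod b))) (Tm (snd (evod a)) (fst (evod b))))"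
  by (simp add: split_beta)

declare evod.simps(3,4) [simp del]

lemma cls_evod: "cls h a = cls h (fst (evod a)) + cls h (snd (evod a))"
  by (induction a) (auto simp: algebra_simps)

lemma cls_evod_evod:
  "(cls h (fst (evod (fst (evod a)))) :: 'a::presentation presented) = cls h (fst (evod a)) \<and>
   (cls h (snd (evod (fst (evod a)))) :: 'a presented) = 0 \<and>
   (cls h (fst (evod (snd (evod a)))) :: 'a presented) = 0 \<and>
   (cls h (snd (evod (snd (evod a)))) :: 'a presented) = cls h (snd (evod a))"
  by (induction a) (auto simp: algebra_simps)

lemma cls_dd_evod:
  "(cls h (dd a) :: 'a::presentation presented)
     = cls h (dd (fst (evod a))) + cls h (dd (snd (evod a)))"
proof (induction a)
  case (G g)
  then show ?case by (cases g) simp_all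
next
  case (Tm a b)
  then show ?case
    using cls_evod[of h b, where 'a = 'a] cls_evod_evod[of h a, where 'a = 'a]
    by (simp add: algebra_simps)
qed (simp_all add: algebra_simps)

lemma ispar_G: "p = gpar g \<Longrightarrow> ispar (G g) p"
  by (simp add: ispar.intros(1))

lemma ispar_evod: "ispar (fst (evod a)) False \<and> ispar (snd (evod a)) True"
proof (induction a)
  case (G g)
  then show ?case by (cases g) (auto intro: ispar.intros ispar_G)
next
  case (Tm a b)
  then have "ispar (Tm (fst (evod a)) (fst (evod b))) False"
    "ispar (Tm (snd (evod a)) (snd (evod b))) False"
    "ispar (Tm (fst (evod a)) (snd (evod b))) True"
    "ispar (Tm (snd (evod a)) (fst (evod b))) True"
    using ispar.intros(5) by fastforce+
  then show ?case by (simp add: ispar.intros(4))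
qed (auto intro: ispar.intros)

lemma fdeg_evod: "fdeg a k \<Longrightarrow> fdeg (fst (evod a)) k \<and> fdeg (snd (evod a)) k"
proof (induction rule: fdeg.induct)
  case (1 g)
  then show ?case by (cases g) (auto intro: fdeg.intros fdeg_G)
qed (auto intro: fdeg.intros fdeg_Tm)

lemma fdeg_dd: "fdeg a k \<Longrightarrow> fdeg (dd a) (Suc k)"
proof (induction rule: fdeg.induct)
  case (1 g)
  then show ?case by (cases g) (auto intro: fdeg.intros fdeg_G)
next
  case (5 a i b j)
  with fdeg_evod[OF 5(1)] show ?case
    by (auto intro!: fdeg.intros(4) fdeg_Tm[OF "5.IH"(1) "5.hyps"(2)] fdeg_Tm[OF _ "5.IH"(2)]
        fdeg_Tm[OF fdeg.intros(2) fdeg_Tm[OF _ "5.IH"(2)]])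
qed (auto intro: fdeg.intros)

lemma fdeg_dd_function: "fdeg f 0 \<Longrightarrow> fdeg (dd f) 1"
  unfolding One_nat_def by (rule fdeg_dd)

lemma sgn_simps [simp]: "sgn False = 1" "sgn True = -1"
  by (simp_all add: sgn_def)

inductive xi_span :: "real \<Rightarrow> fexp \<Rightarrow> bool" for h where
  basis: "isXi a \<Longrightarrow> xi_span h (G a)"
| zero: "xi_span h (C 0)"
| add: "xi_span h x \<Longrightarrow> xi_span h y \<Longrightarrow> xi_span h (Pl x y)"
| left_mult: "fdeg f 0 \<Longrightarrow> xi_span h x \<Longrightarrow> xi_span h (Tm f x)"
| class_eq: "xi_span h x \<Longrightarrow> fdeg y 1 \<Longrightarrow> clsT h y = clsT h x \<Longrightarrow> xi_span h y"

lemma xi_span_fdeg: "xi_span h x \<Longrightarrow> fdeg x 1"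
  by (induction rule: xi_span.induct) (auto simp: isXi_iff_gdeg intro: fdeg.intros fdeg_G fdeg_Tm)

lemma relB_rhs_span: "(l, r) \<in> relB h \<Longrightarrow> xi_span h r"
  unfolding relB_def rho_def mn_def sm_def
  by (auto intro!: xi_span.intros fdeg.intros fdeg_G fdeg_Tm simp: isXi_def)

lemma xi_span_commutator:
  assumes "(mn (Tm f (G a)) (Tm (G a) f), r) \<in> relB h" "fdeg f 0" "isXi a"
  shows "xi_span h (Tm (G a) f)"
proof (rule xi_span.class_eq)
  show "xi_span h (Pl (Tm f (G a)) (Tm (C (-1)) r))"
    using assms relB_rhs_span[OF assms(1)]
    by (blast intro: xi_span.add xi_span.left_mult xi_span.basis fdeg.intros)
  show "fdeg (Tm (G a) f) 1"
    using assms(2,3) by (rule fdeg_xi_mult[rotated])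
  show "clsT h (Tm (G a) f) = clsT h (Pl (Tm f (G a)) (Tm (C (-1)) r))"
    using cls_relation[OF UnI2[OF assms(1)], where 'a = tensors] by (simp add: algebra_simps)
qed

lemma xi_span_anticommutator:
  assumes "(Pl (Tm f (G a)) (Tm (G a) f), r) \<in> relB h" "fdeg f 0" "isXi a"
  shows "xi_span h (Tm (G a) f)"
proof (rule xi_span.class_eq)
  show "xi_span h (Pl r (Tm (C (-1)) (Tm f (G a))))"
    using assms relB_rhs_span[OF assms(1)]
    by (blast intro: xi_span.add xi_span.left_mult xi_span.basis fdeg.intros)
  show "fdeg (Tm (G a) f) 1"
    using assms(2,3) by (rule fdeg_xi_mult[rotated])
  show "clsT h (Tm (G a) f) = clsT h (Pl r (Tm (C (-1)) (Tm f (G a))))"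
    using cls_relation[OF UnI2[OF assms(1)], where 'a = tensors] by (simp add: algebra_simps)
qed

lemma relB_commutation:
  "isXi a \<Longrightarrow> gdeg g = 0 \<Longrightarrow> \<exists>r. (mn (Tm (G g) (G a)) (Tm (G a) (G g)), r) \<in> relB h
                                 \<or> (Pl (Tm (G g) (G a)) (Tm (G a) (G g)), r) \<in> relB h"
  unfolding isXi_def by (cases g) (auto simp: relB_def)

lemma xi_mult_generator_span: "isXi a \<Longrightarrow> gdeg g = 0 \<Longrightarrow> xi_span h (Tm (G a) (G g))"
  using relB_commutation[of a g h] fdeg_G[of 0 g]
  by (metis xi_span_commutator xi_span_anticommutator)

lemma xi_span_mult_right:
  assumes "xi_span h x" "fdeg f 0" "\<And>b. isXi b \<Longrightarrow> xi_span h (Tm (G b) f)"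
  shows "xi_span h (Tm x f)"
  using assms(1)
proof (induction rule: xi_span.induct)
  case (basis a)
  then show ?case by (rule assms(3))
next
  case zero
  show ?case
    by (rule xi_span.class_eq[OF xi_span.zero]) (auto intro: fdeg_Tm fdeg_C0 assms(2))
next
  case (add x y)
  then show ?case
    by (intro xi_span.class_eq[OF xi_span.add[OF add.IH]])
      (auto intro!: fdeg_Tm fdeg.intros xi_span_fdeg assms(2) simp: algebra_simps)
next
  case (left_mult g x)
  then show ?case
    by (intro xi_span.class_eq[OF xi_span.left_mult[OF left_mult.hyps(1) left_mult.IH]])
      (auto intro!: fdeg_Tm xi_span_fdeg assms(2) simp: mult.assoc)
next
  case (class_eq x y)
  then show ?case
    by (intro xi_span.class_eq[OF class_eq.IH]) (auto intro!: fdeg_Tm assms(2))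
qed

lemma xi_mult_span: "fdeg f 0 \<Longrightarrow> isXi a \<Longrightarrow> xi_span h (Tm (G a) f)"
proof (induction f "0::nat" arbitrary: a rule: fdeg.induct)
  case (1 g)
  then show ?case by (simp add: xi_mult_generator_span)
next
  case (2 r)
  show ?case
    by (rule xi_span.class_eq[OF xi_span.left_mult[of "C r", OF _ xi_span.basis[OF 2]]])
      (simp_all add: fdeg.intros fdeg_Tm[OF fdeg_xi[OF 2] fdeg.intros(2)])
next
  case (3 k)
  show ?case
    by (rule xi_span.class_eq[OF xi_span.zero fdeg_xi_mult[OF 3 fdeg_C0]]) simp
next
  case (4 f1 f2)
  then have "xi_span h (Pl (Tm (G a) f1) (Tm (G a) f2))"
    by (simp add: xi_span.add)
  moreover have "fdeg (Tm (G a) (Pl f1 f2)) 1"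
    using 4 by (intro fdeg_xi_mult fdeg.intros(4))
  ultimately show ?case
    by (rule xi_span.class_eq) (simp add: algebra_simps)
next
  case (5 f1 i f2 j)
  have "xi_span h (Tm (Tm (G a) f1) f2)"
    by (rule xi_span_mult_right) (use 5 in simp_all)
  moreover have "fdeg (Tm (G a) (Tm f1 f2)) 1"
    using 5 by (intro fdeg_xi_mult fdeg_left_mult) simp_all
  ultimately show ?case
    by (rule xi_span.class_eq) (simp add: mult.assoc)
qed

lemma xi_span_if_fdeg1: "fdeg w 1 \<Longrightarrow> xi_span h w"
proof (induction w "1::nat" rule: fdeg.induct)
  case (1 g)
  then show ?case by (simp add: xi_span.basis isXi_iff_gdeg)
next
  case (5 a i b j)
  then consider "i = 0" "j = 1" | "i = 1" "j = 0" by linarith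
  then show ?case
  proof cases
    case 1
    with 5 show ?thesis by (simp add: xi_span.left_mult)
  next
    case 2
    with 5 have "xi_span h a" "fdeg b 0" by simp_all
    then show ?thesis by (rule xi_span_mult_right) (rule xi_mult_span[OF \<open>fdeg b 0\<close>])
  qed
qed (simp_all add: xi_span.zero xi_span.add)

section \<open>The identity \<open>\<pi> \<circ> \<sigma> = \<pi>\<close>\<close>

context
  fixes h :: real and sig :: "fexp \<Rightarrow> fexp"
  assumes sigma: "is_sigma h sig"
begin

lemma sigma_parts:
  "fdeg a 2 \<Longrightarrow> fdeg b 2 \<Longrightarrow> eqT h a b \<Longrightarrow> eqT h (sig a) (sig b)"
  "fdeg a 2 \<Longrightarrow> fdeg b 2 \<Longrightarrow> eqT h (sig (Pl a b)) (Pl (sig a) (sig b))"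
  "fdeg f 0 \<Longrightarrow> fdeg a 2 \<Longrightarrow> eqT h (sig (Tm f a)) (Tm f (sig a))"
  "fdeg f 0 \<Longrightarrow> fdeg a 2 \<Longrightarrow> eqT h (sig (Tm a f)) (Tm (sig a) f)"
  "isXi c \<Longrightarrow> isXi d \<Longrightarrow> eqT h (sig (Tm (G c) (G d))) (sigtab h c d)"
  using sigma unfolding is_sigma_def by blast+

lemma sig_class_eq: "fdeg a 2 \<Longrightarrow> fdeg b 2 \<Longrightarrow> clsT h a = clsT h b \<Longrightarrow> clsO h (sig a) = clsO h (sig b)"
  unfolding eqT_iff_clsT[symmetric] by (rule clsO_eq_if_eqT[OF sigma_parts(1)])

lemma sig_Pl: "fdeg a 2 \<Longrightarrow> fdeg b 2 \<Longrightarrow> clsO h (sig (Pl a b)) = clsO h (sig a) + clsO h (sig b)"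
  using clsO_eq_if_eqT[OF sigma_parts(2)] by simp

lemma sig_left_mult: "fdeg f 0 \<Longrightarrow> fdeg a 2 \<Longrightarrow> clsO h (sig (Tm f a)) = clsO h f * clsO h (sig a)"
  using clsO_eq_if_eqT[OF sigma_parts(3)] by simp

lemma sig_right_mult: "fdeg f 0 \<Longrightarrow> fdeg a 2 \<Longrightarrow> clsO h (sig (Tm a f)) = clsO h (sig a) * clsO h f"
  using clsO_eq_if_eqT[OF sigma_parts(4)] by simp

lemma sig_basis: "isXi a \<Longrightarrow> isXi b \<Longrightarrow> clsO h (sig (Tm (G a) (G b))) = clsO h (G a) * clsO h (G b)"
  using clsO_eq_if_eqT[OF sigma_parts(5)] sigtab_eq_wedge by simp

lemma sig_zero:
  assumes t: "fdeg t 2" and zero: "clsT h t = 0"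
  shows "clsO h (sig t) = 0"
proof -
  have e11: "fdeg (Tm e1 e1) 2"
    by (rule fdeg_mult_2[OF fdeg_xi fdeg_xi]) (simp_all add: isXi_def)
  have "clsO h (sig t) = clsO h (sig (Tm (C 0) (Tm e1 e1)))"
    by (rule sig_class_eq[OF t fdeg_left_mult[OF fdeg_C0 e11]]) (simp add: zero)
  also have "\<dots> = 0"
    by (simp add: sig_left_mult[OF fdeg_C0 e11])
  finally show ?thesis .
qed

lemma sig_span_mult:
  assumes "xi_span h x" "fdeg z 1" "\<And>b. isXi b \<Longrightarrow> clsO h (sig (Tm (G b) z)) = clsO h (Tm (G b) z)"
  shows "clsO h (sig (Tm x z)) = clsO h (Tm x z)"
  using assms(1)
proof (induction rule: xi_span.induct)
  case (basis a)
  then show ?case by (rule assms(3))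
next
  case zero
  show ?case
    by (simp add: sig_zero fdeg_mult_2[OF fdeg_C0 assms(2)])
next
  case (add x y)
  note xy = xi_span_fdeg[OF add.hyps(1)] xi_span_fdeg[OF add.hyps(2)]
  have deg: "fdeg (Tm x z) 2" "fdeg (Tm y z) 2" "fdeg (Tm (Pl x y) z) 2"
    using fdeg_mult_2[OF _ assms(2)] xy fdeg.intros(4)[OF xy] by blast+
  have "clsO h (sig (Tm (Pl x y) z)) = clsO h (sig (Pl (Tm x z) (Tm y z)))"
    by (rule sig_class_eq[OF deg(3) fdeg.intros(4)[OF deg(1,2)]]) (simp add: algebra_simps)
  with add.IH deg show ?case
    by (simp add: sig_Pl algebra_simps)
next
  case (left_mult f x)
  note x = xi_span_fdeg[OF left_mult.hyps(2)]
  have deg: "fdeg (Tm x z) 2" "fdeg (Tm (Tm f x) z) 2" "fdeg (Tm f (Tm x z)) 2"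
    using fdeg_mult_2[OF x assms(2)] fdeg_mult_2[OF fdeg_left_mult[OF left_mult.hyps(1) x] assms(2)]
      fdeg_left_mult[OF left_mult.hyps(1) fdeg_mult_2[OF x assms(2)]] by blast+
  have "clsO h (sig (Tm (Tm f x) z)) = clsO h (sig (Tm f (Tm x z)))"
    by (rule sig_class_eq[OF deg(2,3)]) (simp add: mult.assoc)
  with left_mult.IH left_mult.hyps(1) deg show ?case
    by (simp add: sig_left_mult mult.assoc)
next
  case (class_eq x y)
  have deg: "fdeg (Tm y z) 2" "fdeg (Tm x z) 2"
    using fdeg_mult_2[OF _ assms(2)] xi_span_fdeg[OF class_eq.hyps(1)] class_eq.hyps(2) by blast+
  have "clsO h (sig (Tm y z)) = clsO h (sig (Tm x z))"
    by (rule sig_class_eq[OF deg]) (simp add: class_eq.hyps(3))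
  with class_eq.IH clsO_eq_if_clsT_eq[OF class_eq.hyps(3)] show ?case
    by simp
qed

lemma sig_xi_mult:
  "xi_span h z \<Longrightarrow> isXi a \<Longrightarrow> clsO h (sig (Tm (G a) z)) = clsO h (Tm (G a) z)"
proof (induction arbitrary: a rule: xi_span.induct)
  case (basis b)
  then show ?case by (simp add: sig_basis)
next
  case zero
  then show ?case
    by (simp add: sig_zero fdeg_mult_2[OF fdeg_xi fdeg_C0])
next
  case (add x y)
  note xy = xi_span_fdeg[OF add.hyps(1)] xi_span_fdeg[OF add.hyps(2)]
  have deg: "fdeg (Tm (G a) x) 2" "fdeg (Tm (G a) y) 2" "fdeg (Tm (G a) (Pl x y)) 2"
    using fdeg_mult_2[OF fdeg_xi[OF add.prems]] xy fdeg.intros(4)[OF xy] by blast+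
  have "clsO h (sig (Tm (G a) (Pl x y))) = clsO h (sig (Pl (Tm (G a) x) (Tm (G a) y)))"
    by (rule sig_class_eq[OF deg(3) fdeg.intros(4)[OF deg(1,2)]]) (simp add: algebra_simps)
  with add.IH add.prems deg show ?case
    by (simp add: sig_Pl algebra_simps)
next
  case (left_mult f z)
  note z = xi_span_fdeg[OF left_mult.hyps(2)]
  have af: "xi_span h (Tm (G a) f)"
    by (rule xi_mult_span[OF left_mult.hyps(1) left_mult.prems])
  have deg: "fdeg (Tm (G a) (Tm f z)) 2" "fdeg (Tm (Tm (G a) f) z) 2"
    using fdeg_mult_2[OF fdeg_xi[OF left_mult.prems] fdeg_left_mult[OF left_mult.hyps(1) z]]
      fdeg_mult_2[OF xi_span_fdeg[OF af] z] by blast+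
  have "clsO h (sig (Tm (G a) (Tm f z))) = clsO h (sig (Tm (Tm (G a) f) z))"
    by (rule sig_class_eq[OF deg]) (simp add: mult.assoc)
  also have "\<dots> = clsO h (Tm (Tm (G a) f) z)"
    by (rule sig_span_mult[OF af z left_mult.IH])
  finally show ?case
    by (simp add: mult.assoc)
next
  case (class_eq z y)
  have deg: "fdeg (Tm (G a) y) 2" "fdeg (Tm (G a) z) 2"
    using fdeg_mult_2[OF fdeg_xi[OF class_eq.prems]] xi_span_fdeg[OF class_eq.hyps(1)]
      class_eq.hyps(2) by blast+
  have "clsO h (sig (Tm (G a) y)) = clsO h (sig (Tm (G a) z))"
    by (rule sig_class_eq[OF deg]) (simp add: class_eq.hyps(3))
  with class_eq.IH[OF class_eq.prems] clsO_eq_if_clsT_eq[OF class_eq.hyps(3)] show ?case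
    by simp
qed

lemma pi_sigma: "fdeg t 2 \<Longrightarrow> clsO h (sig t) = clsO h t"
proof (induction t "2::nat" rule: fdeg.induct)
  case (1 g)
  then show ?case by (cases g) simp_all
next
  case 3
  then show ?case by (simp add: sig_zero fdeg_C0)
next
  case (4 a b)
  then show ?case by (simp add: sig_Pl)
next
  case (5 a i b j)
  then consider "i = 0" "j = 2" | "i = 1" "j = 1" | "i = 2" "j = 0" by linarith
  then show ?case
  proof cases
    case 1
    with 5 show ?thesis by (simp add: sig_left_mult)
  next
    case 2
    with 5 have "xi_span h a" "fdeg b 1" "xi_span h b"
      by (simp_all add: xi_span_if_fdeg1)
    then show ?thesis by (simp add: sig_span_mult sig_xi_mult)
  next
    case 3
    with 5 show ?thesis by (simp add: sig_right_mult)
  qed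
qed simp

section \<open>Torsion\<close>

context
  fixes D :: "fexp \<Rightarrow> fexp"
  assumes connection: "is_connection h sig D"
begin

lemma connection_parts:
  "fdeg a 1 \<Longrightarrow> fdeg b 1 \<Longrightarrow> eqT h a b \<Longrightarrow> eqT h (D a) (D b)"
  "fdeg a 1 \<Longrightarrow> fdeg b 1 \<Longrightarrow> eqT h (D (Pl a b)) (Pl (D a) (D b))"
  "fdeg a 1 \<Longrightarrow> eqT h (D (sm r a)) (sm r (D a))"
  "fdeg f 0 \<Longrightarrow> ispar f p \<Longrightarrow> fdeg xi 1 \<Longrightarrow>
     eqT h (D (Tm f xi)) (Pl (Tm (dd f) xi) (Tm (C (sgn p)) (Tm f (D xi))))"
  "fdeg f 0 \<Longrightarrow> fdeg xi 1 \<Longrightarrow> ispar xi q \<Longrightarrow>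
     eqT h (D (Tm xi f)) (Pl (Tm (C (sgn q)) (sig (Tm xi (dd f)))) (Tm (D xi) f))"
  using connection unfolding is_connection_def by blast+

lemma D_class_eq: "fdeg a 1 \<Longrightarrow> fdeg b 1 \<Longrightarrow> clsT h a = clsT h b \<Longrightarrow> clsO h (D a) = clsO h (D b)"
  unfolding eqT_iff_clsT[symmetric] by (rule clsO_eq_if_eqT[OF connection_parts(1)])

lemma D_Pl: "fdeg a 1 \<Longrightarrow> fdeg b 1 \<Longrightarrow> clsO h (D (Pl a b)) = clsO h (D a) + clsO h (D b)"
  using clsO_eq_if_eqT[OF connection_parts(2)] by simp

lemma D_zero: "clsO h (D (C 0)) = 0"
proof -
  have e1: "fdeg e1 1"
    by (rule fdeg_xi) (simp add: isXi_def)
  have "clsO h (D (C 0)) = clsO h (D (sm 0 e1))"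
    by (rule D_class_eq[OF fdeg_C0 fdeg_sm[OF e1]]) simp
  also have "\<dots> = 0"
    using clsO_eq_if_eqT[OF connection_parts(3)[OF e1, of 0]] by simp
  finally show ?thesis .
qed

lemma D_left_mult:
  "fdeg f 0 \<Longrightarrow> ispar f p \<Longrightarrow> fdeg xi 1 \<Longrightarrow>
   clsO h (D (Tm f xi)) = clsO h (dd f) * clsO h xi + scalar (sgn p) * (clsO h f * clsO h (D xi))"
  using clsO_eq_if_eqT[OF connection_parts(4)] by simp

lemma D_right_mult:
  assumes "fdeg f 0" "fdeg xi 1" "ispar xi q"
  shows "clsO h (D (Tm xi f))
           = scalar (sgn q) * (clsO h xi * clsO h (dd f)) + clsO h (D xi) * clsO h f"
proof -
  have "fdeg (Tm xi (dd f)) 2"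
    by (rule fdeg_mult_2[OF assms(2) fdeg_dd_function[OF assms(1)]])
  then show ?thesis
    using clsO_eq_if_eqT[OF connection_parts(5)[OF assms]] by (simp add: pi_sigma)
qed

lemma D_evod: "fdeg x 1 \<Longrightarrow> clsO h (D x) = clsO h (D (fst (evod x))) + clsO h (D (snd (evod x)))"
proof -
  assume x: "fdeg x 1"
  then have parts: "fdeg (fst (evod x)) 1" "fdeg (snd (evod x)) 1"
    by (simp_all add: fdeg_evod)
  have "clsO h (D x) = clsO h (D (Pl (fst (evod x)) (snd (evod x))))"
    by (rule D_class_eq[OF x fdeg.intros(4)[OF parts]]) (simp flip: cls_evod)
  then show ?thesis
    by (simp add: D_Pl[OF parts])
qed

lemma dd_eq_D_left_mult:
  assumes f: "fdeg f 0" and x: "fdeg x 1" and IH: "clsO h (dd x) = clsO h (D x)"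
  shows "clsO h (dd (Tm f x)) = clsO h (D (Tm f x))"
proof -
  \<comment> \<open>The Leibniz rule of \<open>D\<close> is only available for functions of pure parity.\<close>
  obtain fe fo where ev: "evod f = (fe, fo)" by fastforce
  with f have deg: "fdeg fe 0" "fdeg fo 0" and par: "ispar fe False" "ispar fo True"
    using fdeg_evod[OF f] ispar_evod[of f] by auto
  have "clsO h (D (Tm f x)) = clsO h (D (Pl (Tm fe x) (Tm fo x)))"
    using fdeg_left_mult[OF f x]
      fdeg.intros(4)[OF fdeg_left_mult[OF deg(1) x] fdeg_left_mult[OF deg(2) x]]
    by (rule D_class_eq) (simp add: cls_evod[of h f] ev algebra_simps)
  also have "\<dots> = clsO h (D (Tm fe x)) + clsO h (D (Tm fo x))"
    by (rule D_Pl[OF fdeg_left_mult[OF deg(1) x] fdeg_left_mult[OF deg(2) x]])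
  also have "\<dots> = clsO h (dd fe) * clsO h x + clsO h fe * clsO h (D x)
                   + (clsO h (dd fo) * clsO h x - clsO h fo * clsO h (D x))"
    by (simp add: D_left_mult[OF deg(1) par(1) x] D_left_mult[OF deg(2) par(2) x])
  also have "\<dots> = clsO h (dd (Tm f x))"
    using cls_dd_evod[of h f, where 'a = forms] ev by (simp add: IH algebra_simps)
  finally show ?thesis ..
qed

lemma dd_eq_D_right_mult:
  assumes x: "fdeg x 1" and f: "fdeg f 0" and IH: "clsO h (dd x) = clsO h (D x)"
  shows "clsO h (dd (Tm x f)) = clsO h (D (Tm x f))"
proof -
  obtain xe xo where ev: "evod x = (xe, xo)" by fastforce
  with x have deg: "fdeg xe 1" "fdeg xo 1" and par: "ispar xe False" "ispar xo True"
    using fdeg_evod[OF x] ispar_evod[of x] by auto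
  have "clsO h (D (Tm x f)) = clsO h (D (Pl (Tm xe f) (Tm xo f)))"
    using fdeg_right_mult[OF x f]
      fdeg.intros(4)[OF fdeg_right_mult[OF deg(1) f] fdeg_right_mult[OF deg(2) f]]
    by (rule D_class_eq) (simp add: cls_evod[of h x] ev algebra_simps)
  also have "\<dots> = clsO h (D (Tm xe f)) + clsO h (D (Tm xo f))"
    by (rule D_Pl[OF fdeg_right_mult[OF deg(1) f] fdeg_right_mult[OF deg(2) f]])
  also have "\<dots> = clsO h xe * clsO h (dd f) + clsO h (D xe) * clsO h f
                   - clsO h xo * clsO h (dd f) + clsO h (D xo) * clsO h f"
    by (simp add: D_right_mult[OF f deg(1) par(1)] D_right_mult[OF f deg(2) par(2)])
  also have "\<dots> = clsO h (dd (Tm x f))"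
    using D_evod[OF x] ev by (simp add: IH algebra_simps)
  finally show ?thesis ..
qed

lemma torsionless_if_basis:
  assumes basis: "\<And>a. isXi a \<Longrightarrow> eqO h (torsion D (G a)) (C 0)"
  shows "torsionless h D"
proof -
  have "clsO h (dd w) = clsO h (D w)" if "fdeg w 1" for w
    using that
  proof (induction w "1::nat" rule: fdeg.induct)
    case (1 g)
    then have "clsO h (torsion D (G g)) = 0"
      using basis[of g] by (simp add: eqO_iff_clsO isXi_iff_gdeg)
    then show ?case by (simp add: torsion_def)
  next
    case 3
    then show ?case by (simp add: D_zero)
  next
    case (4 a b)
    then show ?case by (simp add: D_Pl)
  next
    case (5 a i b j)
    then consider "i = 0" "j = 1" | "i = 1" "j = 0" by linarith
    then show ?case
    proof cases
      case 1
      with 5 show ?thesis by (intro dd_eq_D_left_mult) simp_all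
    next
      case 2
      with 5 show ?thesis by (intro dd_eq_D_right_mult) simp_all
    qed
  qed simp
  then show ?thesis
    by (simp add: torsionless_def eqO_iff_clsO torsion_def)
qed

end

end

section \<open>A representation of \<open>\<Omega>\<close>\<close>

text \<open>\<open>term_op h a\<close> is the action of \<open>a\<close> on \<open>\<real>\<^sup>8\<close>, vectors being functions supported on
  \<open>{0..7}\<close>.\<close>

fun gen_op :: "real \<Rightarrow> gen \<Rightarrow> (nat \<Rightarrow> real) \<Rightarrow> (nat \<Rightarrow> real)" where
  "gen_op h Th1 v =
     (\<lambda>i. if i = 3 then v 0 else if i = 5 then v 1 else if i = 6 then v 2 else if i = 7 then v 4 else 0)"
| "gen_op h Xx v = (\<lambda>i. 0)"
| "gen_op h Th2 v = (\<lambda>i. 0)"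
| "gen_op h Xi1 v = (\<lambda>i. if i = 4 then h * v 1 else if i = 5 then - h * v 3 else 0)"
| "gen_op h Eta v = (\<lambda>i. if i = 2 then v 0 else if i = 4 then - h / 2 * v 2 else if i = 6 then - v 3
                         else if i = 7 then h / 2 * v 6 else 0)"
| "gen_op h Xi2 v =
     (\<lambda>i. if i = 1 then v 0 else if i = 4 then v 1 else if i = 5 then v 3 else if i = 7 then v 5 else 0)"

fun term_op :: "real \<Rightarrow> fexp \<Rightarrow> (nat \<Rightarrow> real) \<Rightarrow> (nat \<Rightarrow> real)" where
  "term_op h (G g) v = gen_op h g v"
| "term_op h (C r) v = (\<lambda>i. r * v i)"
| "term_op h (Pl a b) v = (\<lambda>i. term_op h a v i + term_op h b v i)"
| "term_op h (Tm a b) v = term_op h a (term_op h b v)"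

lemma gen_op_linear:
  "gen_op h g (\<lambda>i. u i + w i) = (\<lambda>i. gen_op h g u i + gen_op h g w i)"
  "gen_op h g (\<lambda>i. r * u i) = (\<lambda>i. r * gen_op h g u i)"
  by (cases g; auto simp: algebra_simps)+

lemma term_op_linear:
  "term_op h a (\<lambda>i. u i + w i) = (\<lambda>i. term_op h a u i + term_op h a w i)"
  "term_op h a (\<lambda>i. r * u i) = (\<lambda>i. r * term_op h a u i)"
  by (induction a arbitrary: u w) (auto simp: gen_op_linear algebra_simps)

lemma term_op_relations: "(l, r) \<in> relA h \<union> relB h \<union> relW h \<Longrightarrow> term_op h l = term_op h r"
  unfolding relA_def relB_def relW_def
  by (auto simp: rho_def mn_def sm_def fun_eq_iff algebra_simps)

lemma term_op_eqO: "eqO h a b \<Longrightarrow> term_op h a = term_op h b"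
  unfolding eqO_def
proof (induction rule: cong.induct)
  case (rel a b)
  then show ?case by (rule term_op_relations)
next
  case (tm_cong a a' b b')
  show ?case by (rule ext) (simp add: tm_cong.IH)
qed (auto simp: fun_eq_iff term_op_linear algebra_simps)

lemma rho_wedge_xi2_nonzero: "eqO h (sm k (Tm (rho h) e2)) (C 0) \<Longrightarrow> k = 0"
  using fun_cong[OF fun_cong[OF term_op_eqO],
      of h "sm k (Tm (rho h) e2)" "C 0" "\<lambda>i. if i = 0 then 1 else 0" 7]
  by (simp add: sm_def rho_def mn_def)

lemma torsion_ansatz:
  assumes D: "eqT h (D \<xi>) (Pl (Pl (sm c0 (Tm X (Tm (rho h) (rho h)))) (sm c (Tm \<xi> (rho h))))
                             (sm c2 (Tm (rho h) \<xi>)))"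
    and swap: "clsO h \<xi> * clsO h (rho h) = scalar s * (clsO h (rho h) * clsO h \<xi>)"
    and closed: "dd \<xi> = C 0"
  shows "clsO h (torsion D \<xi>) = scalar (- (c * s + c2)) * (clsO h (rho h) * clsO h \<xi>)"
proof -
  have "clsO h (torsion D \<xi>) = - clsO h (D \<xi>)"
    by (simp add: torsion_def closed)
  also have "\<dots> = - (scalar c * (scalar s * (clsO h (rho h) * clsO h \<xi>))
                     + scalar c2 * (clsO h (rho h) * clsO h \<xi>))"
    using clsO_eq_if_eqT[OF D] by (simp add: rho_wedge_rho swap)
  also have "\<dots> = scalar (- (c * s + c2)) * (clsO h (rho h) * clsO h \<xi>)"
  proof -
    have coeff: "scalar (- (c * s + c2)) = - (scalar c * scalar s + scalar c2)"
      by (simp only: scalar_uminus scalar_mult scalar_add)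
    show ?thesis
      unfolding coeff by (simp add: algebra_simps)
  qed
  finally show ?thesis .
qed

lemma Xia_wedge_rho:
  "a \<in> {1, 2, 3} \<Longrightarrow>
   clsO h (Xia a) * clsO h (rho h) = scalar ((-1) ^ hat a) * (clsO h (rho h) * clsO h (Xia a))"
  by (auto simp: hat_def xi_wedge_rho eval_nat_numeral)

lemma dd_Xia: "dd (Xia a) = C 0"
  by (cases a rule: Xia.cases) simp_all

lemma Xia_onto_basis: "isXi g \<Longrightarrow> \<exists>a \<in> {1, 2, 3}. Xia a = G g"
  unfolding isXi_def by (auto simp: eval_nat_numeral)

lemma torsion_Xia:
  assumes a: "a \<in> {1, 2, 3}"
    and D: "eqT h (D (Xia a)) (Pl (Pl (sm c0 (Tm (Xa a) (Tm (rho h) (rho h))))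
                                      (sm (c1 * (-1) ^ hat a) (Tm (Xia a) (rho h))))
                                  (sm c2 (Tm (rho h) (Xia a))))"
  shows "eqO h (torsion D (Xia a)) (sm (- (c1 + c2)) (Tm (rho h) (Xia a)))"
proof -
  have "((-1) ^ hat a * (-1) ^ hat a :: real) = 1"
    by (simp add: hat_def)
  then show ?thesis
    using torsion_ansatz[where D = D and \<xi> = "Xia a", OF D Xia_wedge_rho[OF a] dd_Xia]
    by (simp add: eqO_iff_clsO mult.assoc)
qed

lemma torsion_coefficient_if_torsionless:
  assumes "torsionless h D" and "eqO h (torsion D e2) (sm k (Tm (rho h) e2))"
  shows "k = 0"
proof (rule rho_wedge_xi2_nonzero)
  have "eqO h (torsion D e2) (C 0)"
    using assms(1) fdeg_xi[of Xi2] by (simp add: torsionless_def isXi_def)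
  with assms(2) show "eqO h (sm k (Tm (rho h) e2)) (C 0)"
    by (simp add: eqO_iff_clsO)
qed

lemma torsionless_if_Xia:
  assumes "is_sigma h sig" "is_connection h sig D"
    and "\<And>a. a \<in> {1, 2, 3} \<Longrightarrow> eqO h (torsion D (Xia a)) (C 0)"
  shows "torsionless h D"
proof (rule torsionless_if_basis[OF assms(1,2)])
  fix g assume "isXi g"
  then obtain a where "a \<in> {1, 2, 3}" "Xia a = G g"
    using Xia_onto_basis by blast
  with assms(3) show "eqO h (torsion D (G g)) (C 0)"
    by metis
qed

theorem mainTheorem3:
  fixes h c0 c1 c2 :: real and sig D :: "fexp \<Rightarrow> fexp"
  assumes "is_sigma h sig"
    and "is_connection h sig D"
    and "\<forall>a\<in>{1,2,3}. eqT h (D (Xia a))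
           (Pl (Pl (sm c0 (Tm (Xa a) (Tm (rho h) (rho h))))
                   (sm (c1 * (-1) ^ hat a) (Tm (Xia a) (rho h))))
               (sm c2 (Tm (rho h) (Xia a))))"
  shows "(\<forall>a\<in>{1,2,3}. eqO h (torsion D (Xia a)) (sm (-(c1 + c2)) (Tm (rho h) (Xia a))))
         \<and> (torsionless h D \<longleftrightarrow> c2 = -c1)"
proof -
  have torsion: "eqO h (torsion D (Xia a)) (sm (- (c1 + c2)) (Tm (rho h) (Xia a)))"
    if "a \<in> {1, 2, 3}" for a
    using torsion_Xia[OF that] assms(3) that by blast
  have "c2 = -c1" if "torsionless h D"
    using torsion_coefficient_if_torsionless[OF that] torsion[of 3]
    by (force simp: eval_nat_numeral)
  moreover have "torsionless h D" if "c2 = -c1"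
    using torsionless_if_Xia[OF assms(1,2)] torsion that by (simp add: eqO_iff_clsO)
  ultimately show ?thesis
    using torsion by blast
qed

end
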